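(* Let $T$ be a tree on $n$ vertices, with vertex set $\{1,\dots,n\}$ and distance matrix $D$, and let $1$ be a fixed vertex. Let $R(T)=2(n-1)\mathbf{1}^\top D e_1-\mathbf{1}^\top D\mathbf{1}$. Then $$R(T)=4\sum_{1\le a<b\le n} d_{1,P_{a,b}}$$ and $$0\le R(T)\le \tfrac{2}{3}n(n-1)(n-2).$$ The upper bound is achieved if and only if $T$ is the path $P_n$ and vertex $1$ is one of its end vertices; the lower bound is achieved if and only if $T$ is a star and vertex $1$ is its centre.
   Context: $\mathbf{1}$ is the all-ones vector and $e_1$ the first standard basis vector (corresponding to vertex $1$), so $\mathbf{1}^\top De_1=\sum_u d_{u,1}$. $P_{a,b}$ is the unique path in $T$ between $a$ and $b$, and $d_{1,P_{a,b}}$ is the distance from vertex $1$ to the vertex of $P_{a,b}$ closest to it. *)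

theory Defs
  imports Complex_Main
begin

definition is_walk :: "(nat \<Rightarrow> nat \<Rightarrow> bool) \<Rightarrow> nat list \<Rightarrow> bool" where
  "is_walk E xs \<longleftrightarrow> xs \<noteq> [] \<and> (\<forall>i. Suc i < length xs \<longrightarrow> E (xs ! i) (xs ! Suc i))"

definition is_path :: "(nat \<Rightarrow> nat \<Rightarrow> bool) \<Rightarrow> nat list \<Rightarrow> nat \<Rightarrow> nat \<Rightarrow> bool" where
  "is_path E xs a b \<longleftrightarrow> is_walk E xs \<and> distinct xs \<and> hd xs = a \<and> last xs = b"

definition edges :: "(nat \<Rightarrow> nat \<Rightarrow> bool) \<Rightarrow> nat set set" where
  "edges E = {{u, v} | u v. E u v}"

definition is_tree :: "nat \<Rightarrow> (nat \<Rightarrow> nat \<Rightarrow> bool) \<Rightarrow> bool" where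
  "is_tree n E \<longleftrightarrow> n \<ge> 1
     \<and> (\<forall>u v. E u v \<longrightarrow> u \<in> {1..n} \<and> v \<in> {1..n})
     \<and> (\<forall>u v. E u v \<longrightarrow> E v u)
     \<and> (\<forall>u. \<not> E u u)
     \<and> (\<forall>u\<in>{1..n}. \<forall>v\<in>{1..n}. \<exists>xs. is_walk E xs \<and> hd xs = u \<and> last xs = v)
     \<and> card (edges E) = n - 1"

definition gdist :: "(nat \<Rightarrow> nat \<Rightarrow> bool) \<Rightarrow> nat \<Rightarrow> nat \<Rightarrow> nat" where
  "gdist E u v = (LEAST k. \<exists>xs. is_walk E xs \<and> hd xs = u \<and> last xs = v \<and> length xs = Suc k)"

text \<open>Vertex set of the unique path P_{a,b} between a and b in a tree.\<close>
definition path_verts :: "(nat \<Rightarrow> nat \<Rightarrow> bool) \<Rightarrow> nat \<Rightarrow> nat \<Rightarrow> nat set" where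
  "path_verts E a b = set (THE xs. is_path E xs a b)"

definition dist_to_path :: "(nat \<Rightarrow> nat \<Rightarrow> bool) \<Rightarrow> nat \<Rightarrow> nat \<Rightarrow> nat \<Rightarrow> nat" where
  "dist_to_path E w a b = Min ((\<lambda>v. gdist E w v) ` path_verts E a b)"

definition R_index :: "nat \<Rightarrow> (nat \<Rightarrow> nat \<Rightarrow> bool) \<Rightarrow> real" where
  "R_index n E = 2 * (real n - 1) * (\<Sum>u\<in>{1..n}. real (gdist E u 1))
      - (\<Sum>u\<in>{1..n}. \<Sum>v\<in>{1..n}. real (gdist E u v))"

definition is_path_graph_end1 :: "nat \<Rightarrow> (nat \<Rightarrow> nat \<Rightarrow> bool) \<Rightarrow> bool" where
  "is_path_graph_end1 n E \<longleftrightarrow> (\<exists>xs. distinct xs \<and> set xs = {1..n} \<and> hd xs = 1 \<and>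
     (\<forall>u v. E u v \<longleftrightarrow> (\<exists>i. Suc i < length xs \<and>
         ((u = xs ! i \<and> v = xs ! Suc i) \<or> (v = xs ! i \<and> u = xs ! Suc i)))))"

definition is_star_centre1 :: "nat \<Rightarrow> (nat \<Rightarrow> nat \<Rightarrow> bool) \<Rightarrow> bool" where
  "is_star_centre1 n E \<longleftrightarrow> (\<forall>u v. E u v \<longleftrightarrow>
     ((u = 1 \<and> v \<in> {1..n} - {1}) \<or> (v = 1 \<and> u \<in> {1..n} - {1})))"

end

theory Submission
  imports Defs
begin

(* Root the tree at vertex 1 and let anc v be the vertex set of the path from v to 1.
   Along an edge, anc changes by exactly one vertex; this gives
   d(u, v) = |anc u - anc v| + |anc v - anc u| = depth u + depth v - 2 depth (u ^ v),
   where the meet u ^ v is the vertex with anc u Int anc v = anc (u ^ v). The path P_{a,b}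
   runs through a ^ b and otherwise consists of descendants of it, so
   d_{1,P_{a,b}} = depth (a ^ b), and summing the distance formula gives
   R(T) = 4 * sum_{a<b} depth (a ^ b).

   The sum counts the triples (a < b, w) with w a proper ancestor of a ^ b. Such a triple
   is determined by the 3-set {a, b, w}, since w is its only element that is an ancestor
   of the other two; hence R(T) <= 4 (n choose 3). Every 3-set arises iff no two vertices
   have the same depth, i.e. iff T is a path starting at 1. Finally R(T) = 0 iff all meets
   of distinct vertices are the root, i.e. iff every vertex other than 1 is a child of 1. *)

lemma is_walk_Cons_Cons: "is_walk E (x # y # ys) \<longleftrightarrow> E x y \<and> is_walk E (y # ys)"
  unfolding is_walk_def by (auto simp: nth_Cons split: nat.splits)

lemma is_walk_singleton [simp]: "is_walk E [x]"
  by (simp add: is_walk_def)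

lemma is_walk_snoc:
  assumes "is_walk E xs" "E (last xs) v"
  shows "is_walk E (xs @ [v])"
  using assms unfolding is_walk_def
  by (auto simp: nth_append last_conv_nth less_Suc_eq dest: sym[of "Suc _"])

lemma is_walk_take: "is_walk E xs \<Longrightarrow> 0 < k \<Longrightarrow> is_walk E (take k xs)"
  unfolding is_walk_def by auto

lemma is_walk_drop: "is_walk E xs \<Longrightarrow> k < length xs \<Longrightarrow> is_walk E (drop k xs)"
  unfolding is_walk_def by auto

lemma is_walk_nth_edge: "is_walk E xs \<Longrightarrow> Suc i < length xs \<Longrightarrow> E (xs ! i) (xs ! Suc i)"
  unfolding is_walk_def by auto

lemma gdist_le_walk:
  assumes "is_walk E xs" "hd xs = u" "last xs = v"
  shows "gdist E u v \<le> length xs - 1"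
proof -
  have "length xs = Suc (length xs - 1)"
    using assms(1) by (simp add: is_walk_def)
  then show ?thesis
    unfolding gdist_def using assms by (metis (mono_tags, lifting) Least_le)
qed

lemma shortest_walk_exists:
  assumes "is_walk E ys" "hd ys = u" "last ys = v"
  shows "\<exists>xs. is_walk E xs \<and> hd xs = u \<and> last xs = v \<and> length xs = Suc (gdist E u v)"
proof -
  have "length ys = Suc (length ys - 1)"
    using assms(1) by (simp add: is_walk_def)
  then have "\<exists>k xs. is_walk E xs \<and> hd xs = u \<and> last xs = v \<and> length xs = Suc k"
    using assms by blast
  then show ?thesis
    unfolding gdist_def by (rule LeastI_ex)
qed

lemma card_sym_diff_triangle:
  assumes "finite X" "finite Y" "finite Z"
  shows "card (sym_diff X Z) \<le> card (sym_diff X Y) + card (sym_diff Y Z)"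
proof -
  have "card (sym_diff X Z) \<le> card (sym_diff X Y \<union> sym_diff Y Z)"
    using assms by (intro card_mono) auto
  also have "\<dots> \<le> card (sym_diff X Y) + card (sym_diff Y Z)"
    by (rule card_Un_le)
  finally show ?thesis .
qed

lemma card_sym_diff_add_Int:
  assumes "finite X" "finite Y"
  shows "card (sym_diff X Y) + 2 * card (X \<inter> Y) = card X + card Y"
proof -
  have "card (sym_diff X Y) = card (X - Y) + card (Y - X)"
    using assms by (intro card_Un_disjoint) auto
  moreover have "card (X - Y) + card (X \<inter> Y) = card X" "card (Y - X) + card (X \<inter> Y) = card Y"
    using assms by (metis card_Diff_subset_Int card_mono finite_Int Int_lower2
        le_add_diff_inverse2 Int_commute)+
  ultimately show ?thesis by linarith
qed

lemma distinct_hd_eq_last_iff: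
  assumes "distinct xs" "xs \<noteq> []"
  shows "hd xs = last xs \<longleftrightarrow> tl xs = []"
  using assms by (cases xs) auto

lemma sum_square_symmetric:
  fixes f :: "nat \<Rightarrow> nat \<Rightarrow> 'a::comm_semiring_1"
  assumes "\<And>u v. f u v = f v u"
  shows "(\<Sum>u\<in>{1..N}. \<Sum>v\<in>{1..N}. f u v)
    = (\<Sum>u\<in>{1..N}. f u u) + 2 * (\<Sum>a\<in>{1..N}. \<Sum>b\<in>{a<..N}. f a b)"
proof (induction N)
  case 0
  then show ?case by simp
next
  case (Suc N)
  have insert_top: "{1..Suc N} = insert (Suc N) {1..N}" "{a<..Suc N} = insert (Suc N) {a<..N}"
    if "a \<le> N" for a
    using that by auto
  have "(\<Sum>a\<in>{1..Suc N}. \<Sum>b\<in>{a<..Suc N}. f a b)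
      = (\<Sum>a\<in>{1..N}. \<Sum>b\<in>{a<..N}. f a b) + (\<Sum>a\<in>{1..N}. f a (Suc N))"
    by (simp add: insert_top sum.distrib add.commute)
  moreover have "(\<Sum>v\<in>{1..N}. f (Suc N) v) = (\<Sum>u\<in>{1..N}. f u (Suc N))"
    using assms by simp
  ultimately show ?case
    using Suc.IH by (simp add: insert_top sum.distrib distrib_left mult_2 ac_simps)
qed

section \<open>The tree rooted at vertex 1\<close>

locale rooted_tree =
  fixes n :: nat and E :: "nat \<Rightarrow> nat \<Rightarrow> bool"
  assumes tree: "is_tree n E"
begin

lemma n_pos: "1 \<le> n"
  using tree unfolding is_tree_def by auto

lemma root_in_verts: "1 \<in> {1..n}"
  using n_pos by auto

lemma edge_in_verts: "E u v \<Longrightarrow> u \<in> {1..n} \<and> v \<in> {1..n}"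
  using tree unfolding is_tree_def by blast

lemma edge_sym: "E u v \<Longrightarrow> E v u"
  using tree unfolding is_tree_def by blast

lemma card_edges: "card (edges E) = n - 1"
  using tree unfolding is_tree_def by blast

lemma finite_edges: "finite (edges E)"
proof -
  have "edges E \<subseteq> Pow {1..n}"
    unfolding edges_def using edge_in_verts by auto
  then show ?thesis
    by (rule finite_subset) simp
qed

lemma shortest_walk_in_tree:
  assumes "u \<in> {1..n}" "v \<in> {1..n}"
  shows "\<exists>xs. is_walk E xs \<and> hd xs = u \<and> last xs = v \<and> length xs = Suc (gdist E u v)"
proof -
  obtain ys where "is_walk E ys" "hd ys = u" "last ys = v"
    using tree assms unfolding is_tree_def by blast
  then show ?thesis by (rule shortest_walk_exists)
qed

lemma walk_in_verts:
  assumes "is_walk E xs" "hd xs \<in> {1..n}"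
  shows "set xs \<subseteq> {1..n}"
proof
  fix v assume "v \<in> set xs"
  then obtain i where i: "i < length xs" "xs ! i = v"
    by (auto simp: in_set_conv_nth)
  show "v \<in> {1..n}"
  proof (cases i)
    case 0
    then show ?thesis using i assms by (simp add: hd_conv_nth is_walk_def)
  next
    case (Suc j)
    then have "E (xs ! j) v"
      using is_walk_nth_edge[OF assms(1), of j] i by simp
    then show ?thesis using edge_in_verts by blast
  qed
qed

definition depth :: "nat \<Rightarrow> nat" where
  "depth v = gdist E 1 v"

lemma depth_root: "depth 1 = 0"
  using gdist_le_walk[of E "[1]"] by (simp add: depth_def)

lemma depth_eq_0_iff:
  assumes "v \<in> {1..n}"
  shows "depth v = 0 \<longleftrightarrow> v = 1"
proof
  assume "depth v = 0"
  then obtain xs where "is_walk E xs" "hd xs = 1" "last xs = v" "length xs = 1"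
    using shortest_walk_in_tree[OF root_in_verts assms] by (auto simp: depth_def)
  then show "v = 1" by (cases xs) auto
qed (simp only: depth_root)

lemma depth_le_Suc_depth_if_edge:
  assumes "E w v"
  shows "depth v \<le> Suc (depth w)"
proof -
  obtain zs where zs: "is_walk E zs" "hd zs = 1" "last zs = w" "length zs = Suc (depth w)"
    using shortest_walk_in_tree[OF root_in_verts] edge_in_verts[OF assms] by (auto simp: depth_def)
  then have "is_walk E (zs @ [v])" "hd (zs @ [v]) = 1"
    using is_walk_snoc[OF zs(1)] assms by (auto simp: hd_append)
  then show ?thesis
    using gdist_le_walk[of E "zs @ [v]" 1 v] zs(4) by (simp add: depth_def)
qed

lemma parent_exists:
  assumes "v \<in> {1..n}" "v \<noteq> 1"
  shows "\<exists>w. E v w \<and> Suc (depth w) = depth v"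
proof -
  obtain xs where xs: "is_walk E xs" "hd xs = 1" "last xs = v" "length xs = Suc (depth v)"
    using shortest_walk_in_tree[OF root_in_verts assms(1)] by (auto simp: depth_def)
  have pos: "depth v \<noteq> 0"
    using depth_eq_0_iff assms by blast
  define w where "w = xs ! (depth v - 1)"
  have "xs ! depth v = last xs"
    using xs(4) last_conv_nth[of xs] by (metis diff_Suc_1 list.size(3) nat.distinct(1))
  then have "xs ! depth v = v"
    using xs(3) by simp
  then have "E w v"
    using is_walk_nth_edge[OF xs(1), of "depth v - 1"] xs(4) pos by (simp add: w_def)
  define ys where "ys = take (depth v) xs"
  have len_ys: "length ys = depth v"
    using xs(4) by (simp add: ys_def)
  then have "last ys = ys ! (depth v - 1)"
    using pos by (metis last_conv_nth list.size(3))
  also have "\<dots> = w"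
    using pos by (simp add: ys_def w_def)
  finally have "last ys = w" .
  moreover have "is_walk E ys" "hd ys = 1"
    using is_walk_take[OF xs(1)] xs(2) pos by (auto simp: ys_def)
  ultimately have "depth w \<le> depth v - 1"
    using gdist_le_walk[of E ys 1 w] len_ys by (simp add: depth_def)
  moreover have "depth v \<le> Suc (depth w)"
    using depth_le_Suc_depth_if_edge[OF \<open>E w v\<close>] .
  ultimately show ?thesis
    using pos \<open>E w v\<close> edge_sym by (intro exI[of _ w]) auto
qed

definition parent :: "nat \<Rightarrow> nat" where
  "parent v = (SOME w. E v w \<and> Suc (depth w) = depth v)"

context
  fixes v assumes v: "v \<in> {1..n}" "v \<noteq> 1"
begin

lemma edge_parent: "E v (parent v)"
  and depth_parent: "Suc (depth (parent v)) = depth v"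
  using someI_ex[OF parent_exists[OF v]] unfolding parent_def by auto

lemma parent_in_verts: "parent v \<in> {1..n}"
  using edge_in_verts[OF edge_parent] by blast

end

(* The n - 1 edges {v, parent v}, v \<noteq> 1, are pairwise distinct, hence they are all the edges. *)

lemma edge_iff_parent:
  "E u v \<longleftrightarrow> (u \<in> {1..n} - {1} \<and> v = parent u) \<or> (v \<in> {1..n} - {1} \<and> u = parent v)"
proof
  let ?parent_edge = "\<lambda>v. {v, parent v}"
  have "inj_on ?parent_edge ({1..n} - {1})"
  proof (rule inj_onI, rule ccontr)
    fix x y assume "x \<in> {1..n} - {1}" "y \<in> {1..n} - {1}" "{x, parent x} = {y, parent y}" "x \<noteq> y"
    then show False
      using depth_parent[of x] depth_parent[of y] by (auto simp: doubleton_eq_iff)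
  qed
  then have "card (?parent_edge ` ({1..n} - {1})) = card (edges E)"
    using card_edges n_pos by (simp add: card_image)
  moreover have "?parent_edge ` ({1..n} - {1}) \<subseteq> edges E"
    unfolding edges_def using edge_parent by blast
  ultimately have all_edges: "?parent_edge ` ({1..n} - {1}) = edges E"
    using card_subset_eq[OF finite_edges] by blast
  assume "E u v"
  then have "{u, v} \<in> edges E"
    unfolding edges_def by blast
  then obtain w where "w \<in> {1..n} - {1}" "{u, v} = {w, parent w}"
    unfolding all_edges[symmetric] by blast
  then show "(u \<in> {1..n} - {1} \<and> v = parent u) \<or> (v \<in> {1..n} - {1} \<and> u = parent v)"
    by (auto simp: doubleton_eq_iff)
next
  show "(u \<in> {1..n} - {1} \<and> v = parent u) \<or> (v \<in> {1..n} - {1} \<and> u = parent v) \<Longrightarrow> E u v"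
    using edge_parent edge_sym by blast
qed

definition ancestors :: "nat \<Rightarrow> nat set" where
  "ancestors v = (\<lambda>k. (parent ^^ k) v) ` {..depth v}"

lemma parent_iterate:
  assumes "v \<in> {1..n}" "k \<le> depth v"
  shows "(parent ^^ k) v \<in> {1..n} \<and> depth ((parent ^^ k) v) = depth v - k"
  using assms(2)
proof (induction k)
  case 0
  then show ?case using assms(1) by simp
next
  case (Suc k)
  let ?w = "(parent ^^ k) v"
  have w: "?w \<in> {1..n}" "depth ?w = depth v - k"
    using Suc by auto
  then have "?w \<noteq> 1"
    using Suc.prems depth_root by auto
  then show ?case
    using w parent_in_verts depth_parent[of ?w] Suc.prems by auto
qed

lemma finite_ancestors: "finite (ancestors v)"
  by (simp add: ancestors_def)

lemma self_in_ancestors: "v \<in> ancestors v"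
  unfolding ancestors_def by (rule image_eqI[of _ _ 0]) auto

lemma ancestors_subset_verts: "v \<in> {1..n} \<Longrightarrow> ancestors v \<subseteq> {1..n}"
  unfolding ancestors_def using parent_iterate by auto

lemma ancestor_of_depth:
  assumes "v \<in> {1..n}" "d \<le> depth v"
  shows "\<exists>w\<in>ancestors v. depth w = d"
  using parent_iterate[OF assms(1), of "depth v - d"] assms(2)
  unfolding ancestors_def by (intro bexI[of _ "(parent ^^ (depth v - d)) v"]) auto

lemma ancestor_eq_if_depth_eq:
  assumes "v \<in> {1..n}" "x \<in> ancestors v" "y \<in> ancestors v" "depth x = depth y"
  shows "x = y"
proof -
  obtain k j where "k \<le> depth v" "x = (parent ^^ k) v" "j \<le> depth v" "y = (parent ^^ j) v"
    using assms(2,3) unfolding ancestors_def by auto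
  then show ?thesis
    using parent_iterate[OF assms(1), of k] parent_iterate[OF assms(1), of j] assms(4)
    by (metis diff_diff_cancel)
qed

lemma card_ancestors:
  assumes "v \<in> {1..n}"
  shows "card (ancestors v) = Suc (depth v)"
proof -
  have "inj_on (\<lambda>k. (parent ^^ k) v) {..depth v}"
    by (rule inj_onI) (metis atMost_iff diff_diff_cancel parent_iterate[OF assms])
  then show ?thesis
    unfolding ancestors_def by (simp add: card_image)
qed

lemma depth_less: "v \<in> {1..n} \<Longrightarrow> depth v < n"
  using card_mono[OF _ ancestors_subset_verts] card_ancestors by fastforce

lemma depth_ancestor_le: "v \<in> {1..n} \<Longrightarrow> w \<in> ancestors v \<Longrightarrow> depth w \<le> depth v"
  unfolding ancestors_def using parent_iterate by auto

lemma depth_ancestor_less: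
  assumes "v \<in> {1..n}" "w \<in> ancestors v" "w \<noteq> v"
  shows "depth w < depth v"
  using depth_ancestor_le[OF assms(1,2)] ancestor_eq_if_depth_eq[OF assms(1,2) self_in_ancestors] assms(3)
  by fastforce

lemma root_in_ancestors:
  assumes "v \<in> {1..n}"
  shows "1 \<in> ancestors v"
  using ancestor_of_depth[OF assms, of 0] ancestors_subset_verts[OF assms] depth_eq_0_iff by blast

lemma ancestors_root: "ancestors 1 = {1}"
  unfolding ancestors_def depth_root by simp

lemma ancestors_parent:
  assumes "v \<in> {1..n}" "v \<noteq> 1"
  shows "ancestors v = insert v (ancestors (parent v))"
proof -
  have "{..depth v} = insert 0 (Suc ` {..depth (parent v)})"
    using depth_parent[OF assms] atMost_Suc_eq_insert_0 by metis
  then show ?thesis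
    unfolding ancestors_def by (simp add: image_image funpow_Suc_right del: funpow.simps)
qed

lemma not_in_ancestors_parent: "v \<in> {1..n} \<Longrightarrow> v \<noteq> 1 \<Longrightarrow> v \<notin> ancestors (parent v)"
  using depth_ancestor_le[OF parent_in_verts] depth_parent by fastforce

lemma ancestors_subset_if_ancestor:
  assumes "v \<in> {1..n}" "w \<in> ancestors v"
  shows "ancestors w \<subseteq> ancestors v"
proof
  fix x assume "x \<in> ancestors w"
  obtain k where k: "k \<le> depth v" "w = (parent ^^ k) v"
    using assms(2) unfolding ancestors_def by auto
  obtain j where j: "j \<le> depth w" "x = (parent ^^ j) w"
    using \<open>x \<in> ancestors w\<close> unfolding ancestors_def by auto
  have "j + k \<le> depth v" "x = (parent ^^ (j + k)) v"
    using j k parent_iterate[OF assms(1) k(1)] by (auto simp: funpow_add)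
  then show "x \<in> ancestors v"
    unfolding ancestors_def by auto
qed

lemma child_towards_descendant:
  assumes "v \<in> {1..n}" "u \<in> ancestors v" "u \<noteq> v"
  obtains c where "c \<in> ancestors v" "c \<in> {1..n} - {1}" "parent c = u"
proof -
  obtain c where c: "c \<in> ancestors v" "depth c = Suc (depth u)"
    using ancestor_of_depth[OF assms(1)] depth_ancestor_less[OF assms] by (meson Suc_leI)
  then have c_vert: "c \<in> {1..n} - {1}"
    using ancestors_subset_verts[OF assms(1)] depth_root by auto
  then have "parent c \<in> ancestors v"
    using ancestors_subset_if_ancestor[OF assms(1) c(1)] ancestors_parent self_in_ancestors by auto
  then have "parent c = u"
    using ancestor_eq_if_depth_eq[OF assms(1) _ assms(2)] depth_parent[of c] c_vert c(2) by simp
  then show ?thesis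
    using that c(1) c_vert by blast
qed

lemma ancestors_inj:
  assumes "u \<in> {1..n}" "v \<in> {1..n}" "ancestors u = ancestors v"
  shows "u = v"
  using depth_ancestor_less[OF assms(1)] depth_ancestor_less[OF assms(2)] self_in_ancestors assms(3)
  by (metis not_less_iff_gr_or_eq)

section \<open>Distances as symmetric differences of ancestor sets\<close>

lemma card_sym_diff_ancestors_edge:
  assumes "E x y"
  shows "card (sym_diff (ancestors x) (ancestors y)) = 1"
proof -
  have parent_edge: "sym_diff (ancestors v) (ancestors (parent v)) = {v}" if "v \<in> {1..n} - {1}" for v
    using that ancestors_parent not_in_ancestors_parent by auto
  consider "x \<in> {1..n} - {1}" "y = parent x" | "y \<in> {1..n} - {1}" "x = parent y"
    using assms edge_iff_parent by blast
  then have "sym_diff (ancestors x) (ancestors y) = {x} \<or> sym_diff (ancestors x) (ancestors y) = {y}"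
    by cases (use parent_edge in blast)+
  then show ?thesis by auto
qed

lemma walk_length_ge_sym_diff:
  "is_walk E xs \<Longrightarrow> Suc (card (sym_diff (ancestors (hd xs)) (ancestors (last xs)))) \<le> length xs"
proof (induction xs rule: induct_list012)
  case (3 x y zs)
  then have "E x y" "Suc (card (sym_diff (ancestors y) (ancestors (last (y # zs))))) \<le> length (y # zs)"
    using is_walk_Cons_Cons by auto
  moreover have "card (sym_diff (ancestors x) (ancestors (last (y # zs))))
      \<le> card (sym_diff (ancestors x) (ancestors y)) + card (sym_diff (ancestors y) (ancestors (last (y # zs))))"
    by (rule card_sym_diff_triangle) (simp_all add: finite_ancestors)
  ultimately show ?case
    using card_sym_diff_ancestors_edge by simp
qed (simp_all add: is_walk_def)

(* Step up to the parent if u is not an ancestor of b, otherwise down towards b. *)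
lemma neighbour_closer:
  assumes "u \<in> {1..n}" "b \<in> {1..n}" "u \<noteq> b"
  obtains u' where "E u u'"
    "Suc (card (sym_diff (ancestors u') (ancestors b))) = card (sym_diff (ancestors u) (ancestors b))"
proof (cases "u \<in> ancestors b")
  case False
  then have "u \<noteq> 1"
    using root_in_ancestors[OF assms(2)] by auto
  then have "sym_diff (ancestors u) (ancestors b) = insert u (sym_diff (ancestors (parent u)) (ancestors b))"
    "u \<notin> sym_diff (ancestors (parent u)) (ancestors b)"
    using False ancestors_parent[OF assms(1)] not_in_ancestors_parent[OF assms(1)] by auto
  then show ?thesis
    using that edge_parent[OF assms(1) \<open>u \<noteq> 1\<close>] finite_ancestors by simp
next
  case True
  then obtain c where c: "c \<in> ancestors b" "c \<in> {1..n} - {1}" "parent c = u"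
    using child_towards_descendant[OF assms(2)] assms(3) by blast
  then have "ancestors c = insert c (ancestors u)" "c \<notin> ancestors u"
    using ancestors_parent not_in_ancestors_parent by auto
  moreover have "ancestors u \<subseteq> ancestors b"
    using ancestors_subset_if_ancestor[OF assms(2) True] .
  ultimately have "sym_diff (ancestors u) (ancestors b) = insert c (sym_diff (ancestors c) (ancestors b))"
    "c \<notin> sym_diff (ancestors c) (ancestors b)"
    using c(1) by auto
  moreover have "E u c"
    using edge_parent edge_sym c by blast
  ultimately show ?thesis
    using that finite_ancestors by simp
qed

lemma path_of_length_sym_diff:
  assumes "u \<in> {1..n}" "b \<in> {1..n}" "card (sym_diff (ancestors u) (ancestors b)) = k"
  shows "\<exists>xs. is_path E xs u b \<and> length xs = Suc k
    \<and> (\<forall>w\<in>set xs. card (sym_diff (ancestors w) (ancestors b)) \<le> k)"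
  using assms(1,3)
proof (induction k arbitrary: u)
  \<comment> \<open>The bound on the vertices of the path is what keeps it free of repetitions.\<close>
  case 0
  then have "u = b"
    using ancestors_inj[OF _ assms(2)] finite_ancestors by auto
  then show ?case
    by (intro exI[of _ "[b]"]) (simp add: is_path_def)
next
  case (Suc k)
  then have "u \<noteq> b" by auto
  then obtain u' where u': "E u u'"
    "Suc (card (sym_diff (ancestors u') (ancestors b))) = card (sym_diff (ancestors u) (ancestors b))"
    using neighbour_closer[OF Suc.prems(1) assms(2)] by blast
  moreover have "u' \<in> {1..n}"
    using edge_in_verts u'(1) by blast
  ultimately obtain xs where xs: "is_path E xs u' b" "length xs = Suc k"
    "\<forall>w\<in>set xs. card (sym_diff (ancestors w) (ancestors b)) \<le> k"
    using Suc.IH Suc.prems(2) by auto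
  have "u \<notin> set xs"
    using xs(3) Suc.prems(2) by fastforce
  moreover have "is_walk E (u # xs)"
    using xs(1,2) u'(1) is_walk_Cons_Cons by (cases xs) (auto simp: is_path_def)
  ultimately show ?case
    using xs Suc.prems(2) by (intro exI[of _ "u # xs"]) (auto simp: is_path_def)
qed

lemma path_exists: "a \<in> {1..n} \<Longrightarrow> b \<in> {1..n} \<Longrightarrow> \<exists>xs. is_path E xs a b"
  using path_of_length_sym_diff by blast

lemma gdist_eq_card_sym_diff:
  assumes "u \<in> {1..n}" "v \<in> {1..n}"
  shows "gdist E u v = card (sym_diff (ancestors u) (ancestors v))"
proof (rule antisym)
  obtain xs where "is_path E xs u v" "length xs = Suc (card (sym_diff (ancestors u) (ancestors v)))"
    using path_of_length_sym_diff[OF assms] by blast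
  then show "gdist E u v \<le> card (sym_diff (ancestors u) (ancestors v))"
    using gdist_le_walk unfolding is_path_def by fastforce
next
  obtain xs where "is_walk E xs" "hd xs = u" "last xs = v" "length xs = Suc (gdist E u v)"
    using shortest_walk_in_tree[OF assms] by blast
  then show "card (sym_diff (ancestors u) (ancestors v)) \<le> gdist E u v"
    using walk_length_ge_sym_diff by fastforce
qed

section \<open>Uniqueness of paths and the meet of two vertices\<close>

(* The subtree of c is the set of vertices having c as an ancestor; the only edge leading
   into it is {parent c, c}. *)
lemma edge_entering_subtree:
  assumes "E x y" "c \<notin> ancestors x" "c \<in> ancestors y"
  shows "y = c \<and> x = parent c"
proof -
  consider "x \<in> {1..n} - {1}" "y = parent x" | "y \<in> {1..n} - {1}" "x = parent y"
    using assms(1) edge_iff_parent by blast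
  then show ?thesis
  proof cases
    case 1
    then show ?thesis using assms(2,3) ancestors_parent by auto
  next
    case 2
    then show ?thesis using assms(2,3) ancestors_parent by auto
  qed
qed

lemma walk_enters_subtree:
  "is_walk E xs \<Longrightarrow> c \<notin> ancestors (hd xs) \<Longrightarrow> c \<in> ancestors (last xs) \<Longrightarrow> c \<in> set (tl xs)"
proof (induction xs rule: induct_list012)
  case (3 x y zs)
  then show ?case
    using edge_entering_subtree is_walk_Cons_Cons by (cases "c \<in> ancestors y") auto
qed (auto simp: is_walk_def)

lemma walk_leaves_subtree:
  "is_walk E xs \<Longrightarrow> c \<in> ancestors (hd xs) \<Longrightarrow> c \<notin> ancestors (last xs)
    \<Longrightarrow> c \<in> set (butlast xs) \<and> parent c \<in> set (tl xs)"
proof (induction xs rule: induct_list012)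
  case (3 x y zs)
  then have "E y x" "is_walk E (y # zs)"
    using is_walk_Cons_Cons edge_sym by auto
  show ?case
  proof (cases "c \<in> ancestors y")
    case True
    then show ?thesis using "3.IH"(2)[OF \<open>is_walk E (y # zs)\<close>] "3.prems"(3) by auto
  next
    case False
    then show ?thesis using edge_entering_subtree[OF \<open>E y x\<close>] "3.prems"(2) by auto
  qed
qed (auto simp: is_walk_def)

lemma path_second_vertex_up:
  assumes "is_path E (a # x # xs) a b" "b \<in> {1..n}" "a \<notin> ancestors b"
  shows "x = parent a"
proof -
  have walk: "is_walk E (x # xs)" "E a x" "a \<notin> set (x # xs)" "last (x # xs) = b"
    using assms(1) is_walk_Cons_Cons by (auto simp: is_path_def)
  consider "x = parent a" | "x \<in> {1..n} - {1}" "a = parent x"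
    using walk(2) edge_iff_parent by blast
  then show ?thesis
  proof cases
    case 2
    then have "x \<notin> ancestors b"
      using assms(3) ancestors_subset_if_ancestor[OF assms(2)] ancestors_parent self_in_ancestors
      by blast
    then show ?thesis
      using walk_leaves_subtree[OF walk(1)] walk 2 self_in_ancestors by auto
  qed
qed

lemma path_second_vertex_down:
  assumes "is_path E (a # x # xs) a b" "b \<in> {1..n}" "a \<in> ancestors b"
  shows "x \<in> ancestors b \<and> depth x = Suc (depth a)"
proof -
  have walk: "is_walk E (x # xs)" "E a x" "a \<notin> set (x # xs)" "last (x # xs) = b"
    using assms(1) is_walk_Cons_Cons by (auto simp: is_path_def)
  consider "a \<in> {1..n} - {1}" "x = parent a" | "x \<in> {1..n} - {1}" "a = parent x"
    using walk(2) edge_iff_parent by blast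
  then show ?thesis
  proof cases
    case 1
    then have "a \<notin> ancestors x"
      using not_in_ancestors_parent by blast
    then show ?thesis
      using walk_enters_subtree[OF walk(1)] walk assms(3) by auto
  next
    case 2
    then have "x \<in> ancestors b"
      using walk_leaves_subtree[OF walk(1)] walk self_in_ancestors by auto
    then show ?thesis
      using 2 depth_parent by auto
  qed
qed

lemma path_unique:
  "is_path E xs a b \<Longrightarrow> is_path E ys a b \<Longrightarrow> b \<in> {1..n} \<Longrightarrow> xs = ys"
proof (induction xs arbitrary: a ys)
  case Nil
  then show ?case by (simp add: is_path_def is_walk_def)
next
  case (Cons a' xs)
  obtain ys' where ys: "ys = a # ys'" "a' = a"
    using Cons.prems by (cases ys) (auto simp: is_path_def is_walk_def)
  have "xs = [] \<longleftrightarrow> a = b" "ys' = [] \<longleftrightarrow> a = b"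
    using Cons.prems ys distinct_hd_eq_last_iff[of "a # xs"] distinct_hd_eq_last_iff[of ys]
    by (auto simp: is_path_def)
  show ?case
  proof (cases "a = b")
    case True
    then show ?thesis using ys \<open>xs = [] \<longleftrightarrow> a = b\<close> \<open>ys' = [] \<longleftrightarrow> a = b\<close> by simp
  next
    case False
    then obtain x xs' y ys'' where "xs = x # xs'" "ys' = y # ys''"
      using \<open>xs = [] \<longleftrightarrow> a = b\<close> \<open>ys' = [] \<longleftrightarrow> a = b\<close> by (meson neq_Nil_conv)
    moreover have "is_path E (a # x # xs') a b" "is_path E (a # y # ys'') a b"
      using Cons.prems(1,2) ys calculation by auto
    ultimately have "x = y"
      using path_second_vertex_up path_second_vertex_down ancestor_eq_if_depth_eq Cons.prems(3)
      by (cases "a \<in> ancestors b") metis+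
    moreover have "is_path E xs x b" "is_path E ys' x b"
      using Cons.prems(1,2) ys \<open>xs = x # xs'\<close> \<open>ys' = y # ys''\<close> \<open>x = y\<close> is_walk_Cons_Cons
      by (auto simp: is_path_def)
    ultimately show ?thesis
      using Cons.IH Cons.prems(3) ys by blast
  qed
qed

lemma path_verts_eq:
  assumes "is_path E xs a b" "b \<in> {1..n}"
  shows "path_verts E a b = set xs"
  unfolding path_verts_def using assms path_unique by (metis the_equality)

lemma common_ancestors_eq_ancestors:
  assumes "a \<in> {1..n}" "b \<in> {1..n}"
  obtains m where "m \<in> {1..n}" "ancestors a \<inter> ancestors b = ancestors m"
proof -
  let ?C = "ancestors a \<inter> ancestors b"
  obtain m where m: "m \<in> ?C" "depth m = Max (depth ` ?C)"
    using Max_in[of "depth ` ?C"] finite_ancestors root_in_ancestors assms by fastforce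
  have m_vert: "m \<in> {1..n}"
    using ancestors_subset_verts[OF assms(1)] m(1) by auto
  have "?C \<subseteq> ancestors m"
  proof
    fix z assume z: "z \<in> ?C"
    then have "depth z \<le> depth m"
      using m(2) finite_ancestors by simp
    then obtain w where "w \<in> ancestors m" "depth w = depth z"
      using ancestor_of_depth[OF m_vert] by blast
    moreover have "ancestors m \<subseteq> ancestors a"
      using ancestors_subset_if_ancestor[OF assms(1)] m(1) by blast
    ultimately show "z \<in> ancestors m"
      using ancestor_eq_if_depth_eq[OF assms(1)] z by blast
  qed
  moreover have "ancestors m \<subseteq> ?C"
    using ancestors_subset_if_ancestor assms m(1) by blast
  ultimately show ?thesis
    using that m_vert by blast
qed

context
  fixes a b m xs
  assumes path: "is_path E xs a b" and verts: "a \<in> {1..n}" "b \<in> {1..n}"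
    and meet: "ancestors a \<inter> ancestors b = ancestors m"
begin

lemma meet_on_path: "m \<in> set xs"
proof (cases "m = a")
  case True
  then show ?thesis
    using path by (auto simp: is_path_def is_walk_def)
next
  case False
  obtain c where c: "c \<in> ancestors a" "c \<in> {1..n} - {1}" "parent c = m"
    using child_towards_descendant[OF verts(1)] meet self_in_ancestors False by blast
  have "c \<notin> ancestors b"
    using c meet not_in_ancestors_parent ancestors_parent by auto
  then show ?thesis
    using walk_leaves_subtree[of xs c] path c by (auto simp: is_path_def is_walk_def intro: list.set_sel(2))
qed

lemma meet_ancestor_of_path_vertex:
  assumes "v \<in> set xs"
  shows "m \<in> ancestors v"
proof (rule ccontr)
  assume m_not: "m \<notin> ancestors v"
  obtain j where j: "j < length xs" "xs ! j = v"
    using assms by (auto simp: in_set_conv_nth)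
  have "is_walk E (take (Suc j) xs)" "is_walk E (drop j xs)"
    using path j(1) is_walk_take is_walk_drop by (auto simp: is_path_def)
  moreover have "hd (take (Suc j) xs) = a"
    using path by (simp add: is_path_def)
  moreover have "last (take (Suc j) xs) = v"
    using j by (simp add: take_Suc_conv_app_nth)
  moreover have "hd (drop j xs) = v" "last (drop j xs) = b"
    using path j by (auto simp: is_path_def hd_drop_conv_nth)
  moreover have "m \<in> ancestors a" "m \<in> ancestors b"
    using meet self_in_ancestors by auto
  ultimately have "m \<in> set (butlast (take (Suc j) xs))" "m \<in> set (tl (drop j xs))"
    using walk_leaves_subtree walk_enters_subtree m_not by auto
  then have "m \<in> set (take j xs) \<inter> set (drop (Suc j) xs)"
    using j(1) by (simp add: butlast_take tl_drop drop_Suc)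
  then show False
    using path set_take_disj_set_drop_if_distinct[of xs j "Suc j"] by (auto simp: is_path_def)
qed

end

(* By common_ancestors_eq_ancestors and card_ancestors, this is the depth of the meet. *)
definition meet_depth :: "nat \<Rightarrow> nat \<Rightarrow> nat" where
  "meet_depth a b = card (ancestors a \<inter> ancestors b) - 1"

lemma dist_to_path_root:
  assumes "a \<in> {1..n}" "b \<in> {1..n}"
  shows "dist_to_path E 1 a b = meet_depth a b"
proof -
  obtain xs where xs: "is_path E xs a b"
    using path_exists[OF assms] by blast
  obtain m where m: "m \<in> {1..n}" "ancestors a \<inter> ancestors b = ancestors m"
    using common_ancestors_eq_ancestors[OF assms] .
  have "set xs \<subseteq> {1..n}"
    using walk_in_verts xs assms(1) by (auto simp: is_path_def)
  then have "Min (depth ` set xs) = depth m"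
    using meet_on_path[OF xs assms m(2)] meet_ancestor_of_path_vertex[OF xs assms m(2)] depth_ancestor_le
    by (intro Min_eqI) auto
  then show ?thesis
    unfolding dist_to_path_def meet_depth_def path_verts_eq[OF xs assms(2)] m(2) card_ancestors[OF m(1)]
    by (simp add: depth_def)
qed

section \<open>The identity for R and the star case\<close>

lemma meet_depth_commute: "meet_depth a b = meet_depth b a"
  unfolding meet_depth_def by (simp add: Int_commute)

lemma meet_depth_self: "v \<in> {1..n} \<Longrightarrow> meet_depth v v = depth v"
  unfolding meet_depth_def by (simp add: card_ancestors)

lemma meet_depth_root: "v \<in> {1..n} \<Longrightarrow> meet_depth v 1 = 0"
  unfolding meet_depth_def ancestors_root using root_in_ancestors by (simp add: Int_absorb1)

lemma gdist_eq_depth_meet_depth: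
  assumes "u \<in> {1..n}" "v \<in> {1..n}"
  shows "real (gdist E u v) = real (depth u) + real (depth v) - 2 * real (meet_depth u v)"
proof -
  have "1 \<in> ancestors u \<inter> ancestors v"
    using root_in_ancestors assms by blast
  then have "0 < card (ancestors u \<inter> ancestors v)"
    by (auto simp: card_gt_0_iff finite_ancestors)
  then show ?thesis
    using card_sym_diff_add_Int[OF finite_ancestors finite_ancestors, of u v]
    unfolding gdist_eq_card_sym_diff[OF assms] meet_depth_def card_ancestors[OF assms(1)] card_ancestors[OF assms(2)]
    by simp
qed

lemma R_index_eq_meet_depth_sum:
  "R_index n E = 4 * (\<Sum>a\<in>{1..n}. \<Sum>b\<in>{a<..n}. real (meet_depth a b))"
proof -
  let ?D = "\<Sum>u\<in>{1..n}. real (depth u)"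
  let ?M = "\<Sum>a\<in>{1..n}. \<Sum>b\<in>{a<..n}. real (meet_depth a b)"
  have "(\<Sum>u\<in>{1..n}. real (gdist E u 1)) = ?D"
    using gdist_eq_depth_meet_depth[OF _ root_in_verts] meet_depth_root depth_root by simp
  moreover have "(\<Sum>u\<in>{1..n}. \<Sum>v\<in>{1..n}. real (gdist E u v))
      = (\<Sum>u\<in>{1..n}. \<Sum>v\<in>{1..n}. real (depth u) + real (depth v) - 2 * real (meet_depth u v))"
    using gdist_eq_depth_meet_depth by simp
  moreover have "\<dots> = 2 * real n * ?D - 2 * (\<Sum>u\<in>{1..n}. \<Sum>v\<in>{1..n}. real (meet_depth u v))"
    by (simp add: sum.distrib sum_subtractf sum_distrib_left mult.assoc)
  moreover have "(\<Sum>u\<in>{1..n}. \<Sum>v\<in>{1..n}. real (meet_depth u v)) = ?D + 2 * ?M"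
    using sum_square_symmetric[of "\<lambda>u v. real (meet_depth u v)" n] meet_depth_commute meet_depth_self
    by simp
  ultimately show ?thesis
    unfolding R_index_def by (simp add: algebra_simps)
qed

lemma star_centre1_iff_parent_root: "is_star_centre1 n E \<longleftrightarrow> (\<forall>v\<in>{1..n} - {1}. parent v = 1)"
proof
  assume star: "is_star_centre1 n E"
  show "\<forall>v\<in>{1..n} - {1}. parent v = 1"
  proof
    fix v assume "v \<in> {1..n} - {1}"
    moreover have "E v (parent v)"
      using edge_parent calculation by blast
    ultimately show "parent v = 1"
      using star unfolding is_star_centre1_def by simp
  qed
next
  assume "\<forall>v\<in>{1..n} - {1}. parent v = 1"
  then show "is_star_centre1 n E"
    unfolding is_star_centre1_def using edge_iff_parent by auto
qed

lemma meet_depths_zero_iff_parent_root: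
  "(\<forall>a\<in>{1..n}. \<forall>b\<in>{a<..n}. meet_depth a b = 0) \<longleftrightarrow> (\<forall>v\<in>{1..n} - {1}. parent v = 1)"
proof
  assume zero: "\<forall>a\<in>{1..n}. \<forall>b\<in>{a<..n}. meet_depth a b = 0"
  show "\<forall>v\<in>{1..n} - {1}. parent v = 1"
  proof (rule ballI, rule ccontr)
    fix v assume v: "v \<in> {1..n} - {1}" and "parent v \<noteq> 1"
    then have "card {parent v, 1} \<le> card (ancestors v \<inter> ancestors (parent v))"
      using ancestors_parent self_in_ancestors root_in_ancestors parent_in_verts finite_ancestors
      by (intro card_mono) auto
    then have "meet_depth v (parent v) \<noteq> 0"
      using \<open>parent v \<noteq> 1\<close> unfolding meet_depth_def by simp
    moreover have "v \<noteq> parent v"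
      using v not_in_ancestors_parent[of v] self_in_ancestors[of "parent v"] by auto
    moreover have "parent v \<in> {1..n}"
      using parent_in_verts v by blast
    ultimately show False
      using zero v meet_depth_commute[of v "parent v"] by (cases "v < parent v") (auto simp: not_less)
  qed
next
  assume "\<forall>v\<in>{1..n} - {1}. parent v = 1"
  then have anc: "ancestors v \<subseteq> {v, 1}" if "v \<in> {1..n}" for v
    using that ancestors_parent ancestors_root by (cases "v = 1") auto
  have "card (ancestors a \<inter> ancestors b) \<le> card {1::nat}" if "a \<in> {1..n}" "b \<in> {a<..n}" for a b
  proof (rule card_mono)
    show "ancestors a \<inter> ancestors b \<subseteq> {1}"
      using anc[of a] anc[of b] that by auto
  qed simp
  then show "\<forall>a\<in>{1..n}. \<forall>b\<in>{a<..n}. meet_depth a b = 0"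
    unfolding meet_depth_def by fastforce
qed

section \<open>Counting triples and the path case\<close>

definition proper_common_ancestors :: "nat \<Rightarrow> nat \<Rightarrow> nat set" where
  "proper_common_ancestors a b =
    {w \<in> ancestors a \<inter> ancestors b. \<exists>z \<in> ancestors a \<inter> ancestors b. depth w < depth z}"

definition ancestor_triples :: "(nat \<times> nat \<times> nat) set" where
  "ancestor_triples = (SIGMA a:{1..n}. SIGMA b:{a<..n}. proper_common_ancestors a b)"

definition triple_set :: "nat \<times> nat \<times> nat \<Rightarrow> nat set" where
  "triple_set t = (case t of (a, b, w) \<Rightarrow> {a, b, w})"

lemma card_proper_common_ancestors:
  assumes "a \<in> {1..n}" "b \<in> {1..n}"
  shows "card (proper_common_ancestors a b) = meet_depth a b"
proof -
  obtain m where m: "m \<in> {1..n}" "ancestors a \<inter> ancestors b = ancestors m"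
    using common_ancestors_eq_ancestors[OF assms] .
  have "proper_common_ancestors a b = ancestors m - {m}"
    unfolding proper_common_ancestors_def m(2)
    using depth_ancestor_less[OF m(1)] depth_ancestor_le[OF m(1)] self_in_ancestors
    by (auto simp: not_less[symmetric])
  then show ?thesis
    unfolding meet_depth_def m(2) using self_in_ancestors finite_ancestors by simp
qed

lemma card_ancestor_triples:
  "card ancestor_triples = (\<Sum>a\<in>{1..n}. \<Sum>b\<in>{a<..n}. meet_depth a b)"
proof -
  have "finite (proper_common_ancestors a b)" for a b
    unfolding proper_common_ancestors_def using finite_ancestors by simp
  then show ?thesis
    unfolding ancestor_triples_def using card_proper_common_ancestors
    by simp
qed

lemma ancestor_triplesD:
  assumes "(a, b, w) \<in> ancestor_triples"
  shows "a \<in> {1..n}" "b \<in> {1..n}" "a < b" "w \<in> ancestors a" "w \<in> ancestors b"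
    "depth w < depth a" "depth w < depth b"
proof -
  show ab: "a \<in> {1..n}" "b \<in> {1..n}" "a < b"
    using assms unfolding ancestor_triples_def by auto
  obtain z where "w \<in> ancestors a" "w \<in> ancestors b" "z \<in> ancestors a" "z \<in> ancestors b" "depth w < depth z"
    using assms unfolding ancestor_triples_def proper_common_ancestors_def by auto
  then show "w \<in> ancestors a" "w \<in> ancestors b" "depth w < depth a" "depth w < depth b"
    using depth_ancestor_le ab by (auto intro: less_le_trans)
qed

lemma inj_on_triple_set: "inj_on triple_set ancestor_triples"
proof (rule inj_onI)
  fix t t' assume "t \<in> ancestor_triples" "t' \<in> ancestor_triples" "triple_set t = triple_set t'"
  moreover obtain a b w a' b' w' where "t = (a, b, w)" "t' = (a', b', w')"
    by (metis prod_cases3)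
  ultimately have t: "(a, b, w) \<in> ancestor_triples" "(a', b', w') \<in> ancestor_triples"
    and eq: "triple_set (a, b, w) = triple_set (a', b', w')"
    by auto
  note d = ancestor_triplesD[OF t(1)] and d' = ancestor_triplesD[OF t(2)]
  have "w' = w"
  proof (rule ccontr)
    assume "w' \<noteq> w"
    then have "w' \<in> {a, b}" "w \<in> {a', b'}"
      using eq unfolding triple_set_def by auto
    then show False
      using d d' by auto
  qed
  moreover have "{a, b} = {a', b'}"
    using eq d d' calculation unfolding triple_set_def by auto
  ultimately show "t = t'"
    using \<open>t = (a, b, w)\<close> \<open>t' = (a', b', w')\<close> d(3) d'(3) by (auto simp: doubleton_eq_iff)
qed

lemma triple_set_ancestor_triples_subset:
  "triple_set ` ancestor_triples \<subseteq> {X. X \<subseteq> {1..n} \<and> card X = 3}"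
proof
  fix X assume "X \<in> triple_set ` ancestor_triples"
  then obtain a b w where t: "(a, b, w) \<in> ancestor_triples" and X: "X = {a, b, w}"
    unfolding triple_set_def by auto
  note d = ancestor_triplesD[OF t]
  moreover have "w \<in> {1..n}"
    using ancestors_subset_verts[OF d(1)] d(4) by blast
  ultimately show "X \<in> {X. X \<subseteq> {1..n} \<and> card X = 3}"
    unfolding X by (auto simp: card_insert_if)
qed

lemma card_ancestor_triples_le: "card ancestor_triples \<le> n choose 3"
  using card_mono[OF _ triple_set_ancestor_triples_subset] card_image[OF inj_on_triple_set]
    n_subsets[of "{1..n}" 3] by simp

lemma card_ancestor_triples_eq_iff:
  "card ancestor_triples = n choose 3
    \<longleftrightarrow> triple_set ` ancestor_triples = {X. X \<subseteq> {1..n} \<and> card X = 3}"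
  using card_subset_eq[OF _ triple_set_ancestor_triples_subset] card_image[OF inj_on_triple_set]
    n_subsets[of "{1..n}" 3] by auto

lemma ancestors_eq_if_inj_depth:
  assumes inj: "inj_on depth {1..n}" and v: "v \<in> {1..n}"
  shows "ancestors v = {u \<in> {1..n}. depth u \<le> depth v}"
proof
  show "ancestors v \<subseteq> {u \<in> {1..n}. depth u \<le> depth v}"
    using ancestors_subset_verts[OF v] depth_ancestor_le[OF v] by auto
  show "{u \<in> {1..n}. depth u \<le> depth v} \<subseteq> ancestors v"
  proof clarify
    fix u assume u: "u \<in> {1..n}" "depth u \<le> depth v"
    then obtain w where "w \<in> ancestors v" "depth w = depth u"
      using ancestor_of_depth[OF v] by blast
    moreover have "w \<in> {1..n}"
      using ancestors_subset_verts[OF v] calculation(1) by blast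
    ultimately show "u \<in> ancestors v"
      using inj u(1) by (metis inj_onD)
  qed
qed

lemma ancestor_triplesI_if_inj_depth:
  assumes inj: "inj_on depth {1..n}" and verts: "a \<in> {1..n}" "b \<in> {1..n}" "w \<in> {1..n}"
    and "a < b" "depth w < depth a" "depth w < depth b"
  shows "(a, b, w) \<in> ancestor_triples"
proof -
  let ?z = "if depth a \<le> depth b then a else b"
  have "w \<in> ancestors a \<inter> ancestors b" "?z \<in> ancestors a \<inter> ancestors b" "depth w < depth ?z"
    using assms ancestors_eq_if_inj_depth[OF inj] by auto
  then have "w \<in> proper_common_ancestors a b"
    unfolding proper_common_ancestors_def by blast
  then show ?thesis
    unfolding ancestor_triples_def using verts \<open>a < b\<close> by auto
qed

lemma triple_set_surj_if_inj_depth: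
  assumes inj: "inj_on depth {1..n}"
  shows "triple_set ` ancestor_triples = {X. X \<subseteq> {1..n} \<and> card X = 3}"
proof
  show "{X. X \<subseteq> {1..n} \<and> card X = 3} \<subseteq> triple_set ` ancestor_triples"
  proof clarify
    fix X assume X: "X \<subseteq> {1..n}" "card X = 3"
    then have "finite X" "X \<noteq> {}"
      using finite_subset by auto
    then have "Min (depth ` X) \<in> depth ` X"
      by (intro Min_in) auto
    then obtain w where w: "w \<in> X" "depth w = Min (depth ` X)"
      by (metis imageE)
    have "card (X - {w}) = 2"
      using X(2) w(1) by simp
    then obtain a b where ab: "X - {w} = {a, b}" "a < b"
      unfolding card_2_iff by (metis insert_commute linorder_neqE_nat)
    have shallower: "depth w < depth x" if "x \<in> X - {w}" for x
    proof -
      have "depth w \<le> depth x"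
        using w(2) \<open>finite X\<close> that by simp
      moreover have "depth w \<noteq> depth x"
        using inj X(1) w(1) that by (metis DiffE inj_onD singletonI subsetD)
      ultimately show ?thesis by simp
    qed
    have "a \<in> X - {w}" "b \<in> X - {w}"
      using ab(1) by blast+
    then have "depth w < depth a" "depth w < depth b"
      using shallower by blast+
    moreover have "a \<in> {1..n}" "b \<in> {1..n}" "w \<in> {1..n}"
      using X(1) w(1) \<open>a \<in> X - {w}\<close> \<open>b \<in> X - {w}\<close> by blast+
    ultimately have "(a, b, w) \<in> ancestor_triples"
      using ancestor_triplesI_if_inj_depth[OF inj] ab(2) by blast
    moreover have "X = triple_set (a, b, w)"
      using ab(1) w(1) unfolding triple_set_def by auto
    ultimately show "X \<in> triple_set ` ancestor_triples"
      by blast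
  qed
qed (rule triple_set_ancestor_triples_subset)

lemma inj_depth_if_triple_set_surj:
  assumes surj: "triple_set ` ancestor_triples = {X. X \<subseteq> {1..n} \<and> card X = 3}"
  shows "inj_on depth {1..n}"
proof (rule inj_onI, rule ccontr)
  \<comment> \<open>Two vertices of equal depth and their meet form a 3-set not of the form \<open>{a, b, w}\<close>.\<close>
  fix u v assume u: "u \<in> {1..n}" and v: "v \<in> {1..n}" and same_depth: "depth u = depth v" and "u \<noteq> v"
  obtain m where m: "m \<in> {1..n}" "ancestors u \<inter> ancestors v = ancestors m"
    using common_ancestors_eq_ancestors[OF u v] .
  have "m \<in> ancestors u" "m \<in> ancestors v"
    using m(2) self_in_ancestors by auto
  then have "m \<noteq> u" "m \<noteq> v" "depth m < depth u"
    using ancestor_eq_if_depth_eq[OF u _ self_in_ancestors] ancestor_eq_if_depth_eq[OF v _ self_in_ancestors]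
      same_depth \<open>u \<noteq> v\<close> depth_ancestor_less[OF u] by metis+
  then have "{u, v, m} \<in> triple_set ` ancestor_triples"
    unfolding surj using u v m(1) \<open>u \<noteq> v\<close> by (auto simp: card_insert_if)
  then obtain a b w where t: "(a, b, w) \<in> ancestor_triples" and eq: "{a, b, w} = {u, v, m}"
    unfolding triple_set_def by auto
  note d = ancestor_triplesD[OF t]
  have "w = m"
  proof (rule ccontr)
    assume "w \<noteq> m"
    then have "m \<in> {a, b}" "w \<in> {u, v}"
      using eq by auto
    then have "depth m > depth w" "depth w > depth m"
      using d same_depth \<open>depth m < depth u\<close> by auto
    then show False by simp
  qed
  then have "{a, b} = {u, v}"
    using eq d \<open>m \<noteq> u\<close> \<open>m \<noteq> v\<close> by auto
  then have "w \<in> proper_common_ancestors u v"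
    using t unfolding ancestor_triples_def by (auto simp: doubleton_eq_iff Int_commute proper_common_ancestors_def)
  then show False
    unfolding proper_common_ancestors_def m(2) \<open>w = m\<close> using depth_ancestor_le[OF m(1)] by fastforce
qed

lemma edge_iff_depth_Suc_if_inj_depth:
  assumes inj: "inj_on depth {1..n}"
  shows "E u v \<longleftrightarrow> u \<in> {1..n} \<and> v \<in> {1..n} \<and> (depth u = Suc (depth v) \<or> depth v = Suc (depth u))"
proof
  assume "E u v"
  then consider "u \<in> {1..n} - {1}" "v = parent u" | "v \<in> {1..n} - {1}" "u = parent v"
    using edge_iff_parent by blast
  then show "u \<in> {1..n} \<and> v \<in> {1..n} \<and> (depth u = Suc (depth v) \<or> depth v = Suc (depth u))"
    by cases (use depth_parent parent_in_verts in auto)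
next
  have edge: "E x y" if "x \<in> {1..n}" "y \<in> {1..n}" "depth x = Suc (depth y)" for x y
  proof -
    have "x \<noteq> 1"
      using that(3) depth_root by auto
    then have "parent x = y"
      using that inj depth_parent parent_in_verts by (metis Suc_inject inj_onD)
    then show ?thesis
      using edge_parent that(1) \<open>x \<noteq> 1\<close> by blast
  qed
  assume "u \<in> {1..n} \<and> v \<in> {1..n} \<and> (depth u = Suc (depth v) \<or> depth v = Suc (depth u))"
  then show "E u v"
    using edge edge_sym by blast
qed

lemma depth_nth_path_from_root:
  assumes path: "is_path E xs 1 b" and "i < length xs"
  shows "depth (xs ! i) = i"
proof -
  have walk: "is_walk E xs" and "distinct xs" and "xs ! 0 = 1"
    using path by (auto simp: is_path_def is_walk_def hd_conv_nth)
  have "depth (xs ! i) = i \<and> (0 < i \<longrightarrow> parent (xs ! i) = xs ! (i - 1))"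
    using \<open>i < length xs\<close>
  proof (induction i)
    case 0
    then show ?case using \<open>xs ! 0 = 1\<close> depth_root by simp
  next
    case (Suc i)
    then have IH: "depth (xs ! i) = i" "0 < i \<Longrightarrow> parent (xs ! i) = xs ! (i - 1)"
      by auto
    consider "xs ! Suc i \<in> {1..n} - {1}" "xs ! i = parent (xs ! Suc i)"
      | "xs ! i \<in> {1..n} - {1}" "xs ! Suc i = parent (xs ! i)"
      using is_walk_nth_edge[OF walk Suc.prems] edge_iff_parent by blast
    then show ?case
    proof cases
      case 1
      then show ?thesis using depth_parent IH(1) by fastforce
    next
      case 2
      then have "0 < i"
        using \<open>xs ! 0 = 1\<close> by (cases i) auto
      then have "xs ! Suc i = xs ! (i - 1)"
        using 2 IH(2) by simp
      then show ?thesis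
        using nth_eq_iff_index_eq[OF \<open>distinct xs\<close>] Suc.prems by simp
    qed
  qed
  then show ?thesis by simp
qed

lemma inj_depth_if_path_graph:
  assumes "is_path_graph_end1 n E"
  shows "inj_on depth {1..n}"
proof -
  obtain xs where xs: "distinct xs" "set xs = {1..n}" "hd xs = 1"
    and edges: "\<forall>u v. E u v \<longleftrightarrow> (\<exists>i. Suc i < length xs \<and>
         ((u = xs ! i \<and> v = xs ! Suc i) \<or> (v = xs ! i \<and> u = xs ! Suc i)))"
    using assms unfolding is_path_graph_end1_def by blast
  have "xs \<noteq> []"
    using xs(2) n_pos by auto
  then have "is_path E xs 1 (last xs)"
    using xs(1,3) edges unfolding is_path_def is_walk_def by blast
  then have "depth (xs ! i) = i" if "i < length xs" for i
    using depth_nth_path_from_root that by blast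
  then show ?thesis
    unfolding xs(2)[symmetric] by (metis in_set_conv_nth inj_onI)
qed

lemma bij_betw_depth_if_inj_depth:
  assumes inj: "inj_on depth {1..n}"
  shows "bij_betw depth {1..n} {0..<n}"
proof -
  have "depth ` {1..n} \<subseteq> {0..<n}"
    using depth_less by auto
  then have "depth ` {1..n} = {0..<n}"
    using card_subset_eq[of "{0..<n}" "depth ` {1..n}"] card_image[OF inj] by simp
  then show ?thesis
    using inj by (simp add: bij_betw_def)
qed

lemma path_graph_if_inj_depth:
  assumes inj: "inj_on depth {1..n}"
  shows "is_path_graph_end1 n E"
proof -
  have bij: "bij_betw depth {1..n} {0..<n}"
    using bij_betw_depth_if_inj_depth[OF inj] .
  define vertex_at where "vertex_at = inv_into {1..n} depth"
  have vertex_at: "vertex_at i \<in> {1..n}" "depth (vertex_at i) = i" if "i < n" for i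
    using bij_betw_inv_into_right[OF bij] bij_betw_apply[OF bij_betw_inv_into[OF bij]] that
    by (auto simp: vertex_at_def)
  have vertex_at_depth: "vertex_at (depth v) = v" if "v \<in> {1..n}" for v
    using inv_into_f_f[OF inj that] by (simp add: vertex_at_def)
  define xs where "xs = map vertex_at [0..<n]"
  have "distinct xs" "set xs = {1..n}"
    using bij_betw_inv_into[OF bij] unfolding xs_def vertex_at_def
    by (simp_all add: distinct_map bij_betw_def)
  moreover have "hd xs = 1"
    using n_pos vertex_at_depth[OF root_in_verts] depth_root
    by (simp add: xs_def hd_map upt_rec)
  moreover have consecutive: "(\<exists>i. Suc i < length xs \<and> u = xs ! i \<and> v = xs ! Suc i)
      \<longleftrightarrow> u \<in> {1..n} \<and> v \<in> {1..n} \<and> depth v = Suc (depth u)" for u v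
  proof
    assume "\<exists>i. Suc i < length xs \<and> u = xs ! i \<and> v = xs ! Suc i"
    then show "u \<in> {1..n} \<and> v \<in> {1..n} \<and> depth v = Suc (depth u)"
      using vertex_at by (auto simp: xs_def simp del: upt_Suc)
  next
    assume "u \<in> {1..n} \<and> v \<in> {1..n} \<and> depth v = Suc (depth u)"
    then show "\<exists>i. Suc i < length xs \<and> u = xs ! i \<and> v = xs ! Suc i"
      using depth_less[of v] vertex_at_depth[of u] vertex_at_depth[of v]
      by (intro exI[of _ "depth u"]) (auto simp: xs_def simp del: upt_Suc)
  qed
  moreover have "E u v \<longleftrightarrow> (\<exists>i. Suc i < length xs \<and>
      ((u = xs ! i \<and> v = xs ! Suc i) \<or> (v = xs ! i \<and> u = xs ! Suc i)))" for u v
    using edge_iff_depth_Suc_if_inj_depth[OF inj, of u v] consecutive[of u v] consecutive[of v u]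
    by blast
  ultimately show ?thesis
    unfolding is_path_graph_end1_def by blast
qed

lemma meet_depth_sum_eq_0_iff_star:
  "(\<Sum>a\<in>{1..n}. \<Sum>b\<in>{a<..n}. real (meet_depth a b)) = 0 \<longleftrightarrow> is_star_centre1 n E"
proof -
  have "(\<Sum>a\<in>{1..n}. \<Sum>b\<in>{a<..n}. real (meet_depth a b)) = 0
      \<longleftrightarrow> (\<forall>a\<in>{1..n}. \<forall>b\<in>{a<..n}. meet_depth a b = 0)"
    by (simp add: sum_nonneg_eq_0_iff sum_nonneg)
  then show ?thesis
    using meet_depths_zero_iff_parent_root star_centre1_iff_parent_root by simp
qed

lemma card_ancestor_triples_eq_iff_path_graph:
  "card ancestor_triples = n choose 3 \<longleftrightarrow> is_path_graph_end1 n E"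
  using card_ancestor_triples_eq_iff triple_set_surj_if_inj_depth inj_depth_if_triple_set_surj
    path_graph_if_inj_depth inj_depth_if_path_graph by blast

end

theorem proposition2p8:
  fixes n :: nat and E :: "nat \<Rightarrow> nat \<Rightarrow> bool"
  assumes "is_tree n E"
  shows "R_index n E = 4 * (\<Sum>a\<in>{1..n}. \<Sum>b\<in>{a<..n}. real (dist_to_path E 1 a b))
      \<and> 0 \<le> R_index n E
      \<and> R_index n E \<le> 2 / 3 * real n * (real n - 1) * (real n - 2)
      \<and> (R_index n E = 2 / 3 * real n * (real n - 1) * (real n - 2) \<longleftrightarrow> is_path_graph_end1 n E)
      \<and> (R_index n E = 0 \<longleftrightarrow> is_star_centre1 n E)"
proof -
  interpret rooted_tree n E
    using assms by (rule rooted_tree.intro)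
  let ?M = "\<Sum>a\<in>{1..n}. \<Sum>b\<in>{a<..n}. real (meet_depth a b)"
  have R: "R_index n E = 4 * ?M"
    by (rule R_index_eq_meet_depth_sum)
  have "(\<Sum>a\<in>{1..n}. \<Sum>b\<in>{a<..n}. real (dist_to_path E 1 a b)) = ?M"
    using dist_to_path_root by (intro sum.cong) auto
  moreover have "?M = real (card ancestor_triples)"
    by (simp add: card_ancestor_triples)
  moreover have "2 / 3 * real n * (real n - 1) * (real n - 2) = 4 * real (n choose 3)"
    by (simp add: binomial_gbinomial gbinomial_prod_rev eval_nat_numeral)
  ultimately show ?thesis
    using R card_ancestor_triples_le card_ancestor_triples_eq_iff_path_graph meet_depth_sum_eq_0_iff_star
    by simp
qed

end
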